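(* For all $v\in V^X$, the sequence $(\lambda^k(v))_{k\in\mathbb{N}}$ is non-increasing and the sequence of sets $(\Lambda^k(v))_{k\in\mathbb{N}}$ is non-increasing for inclusion.
   Context: Let $\mathcal{G}$ be a quantitative reachability game on an arena $G=(\Pi,V,(V_i)_{i\in\Pi},E)$ (finite player set $\Pi$, finite vertex set $V$ with $|V|\ge2$, $|\Pi|\le|V|$, partition $(V_i)$, every vertex has a successor) with targets $F_i\subseteq V$ and costs $\mathrm{Cost}_i(\rho)=$ least $k$ with $\rho_k\in F_i$ (or $+\infty$); $v_0\in V$. Extended game: arena $X$ with vertices $V^X=V\times2^\Pi$, edges $((v,I),(v',I'))\in E^X$ iff $(v,v')\in E$ and $I'=I\cup\{i:v'\in F_i\}$, $(v,I)\in V^X_i$ iff $v\in V_i$, targets $F^X_i=\{(v,I):i\in I\}$ with corresponding reachability costs $\mathrm{Cost}_i$; $x_0=(v_0,\{i:v_0\in F_i\})$. $I(u)$ is the second component of $u$. $\mathcal{I}$ is the set of $I$ with some $(v,I)$ reachable from $x_0$, $N=|\mathcal{I}|$, $J_1<\dots<J_N$ a fixed total order of $\mathcal{I}$ extending $I<I'$ iff $I\ne I'$ and some $(v',I')$ is reachable from some $(v,I)$. $V^{\ge J_n}=\{(v,J_m):v\in V,m\ge n\}$. Labelings: for $\lambda:V^X\to\mathbb{N}\cup\{+\infty\}$, a play $\rho$ of $X$ is $\lambda$-consistent if $\mathrm{Cost}_i(\rho_{\ge n})\le\lambda(\rho_n)$ for all $n$ and $i$ with $\rho_n\in V^X_i$.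 $\lambda^0(u)=0$ if $u\in V^X_i$ and $i\in I(u)$, else $+\infty$. The update of $\lambda^k$ w.r.t. $V^{\ge J_n}$ keeps values outside $V^{\ge J_n}$ and for $u\in V^{\ge J_n}\cap V^X_i$ sets $\lambda^{k+1}(u)=0$ if $i\in I(u)$, otherwise $1+\min_{(u,u')\in E^X}\sup\{\mathrm{Cost}_i(\rho):\rho\in\Lambda^k(u')\}$ ($1+(+\infty)=+\infty$). The sequence is generated by $n_0=N$, $\lambda^{k+1}=$ update of $\lambda^k$ w.r.t. $V^{\ge J_{n_k}}$, $n_{k+1}=n_k-1$ if $\lambda^{k+1}=\lambda^k$ and $n_k>1$, else $n_{k+1}=n_k$. $\Lambda^k(v)$ is the set of $\lambda^k$-consistent plays of $X$ from $v$. *)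

theory Defs
  imports Main "HOL-Library.Extended_Nat"
begin

(* Arena: players Pi, vertices V, owner function own (V_i = {v \<in> V. own v = i}),
   edges E, targets F i; plays are infinite sequences nat \<Rightarrow> vertex. *)

definition arena :: "'p set \<Rightarrow> 'v set \<Rightarrow> ('v \<Rightarrow> 'p) \<Rightarrow> ('v \<times> 'v) set \<Rightarrow> bool" where
  "arena Pi V own E \<longleftrightarrow> finite Pi \<and> finite V \<and> card V \<ge> 2 \<and> card Pi \<le> card V
     \<and> own ` V \<subseteq> Pi \<and> E \<subseteq> V \<times> V \<and> (\<forall>v\<in>V. \<exists>v'. (v, v') \<in> E)"

definition cost :: "('p \<Rightarrow> 'v set) \<Rightarrow> 'p \<Rightarrow> (nat \<Rightarrow> 'v) \<Rightarrow> enat" where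
  "cost F i \<rho> = (if \<exists>k. \<rho> k \<in> F i then enat (LEAST k. \<rho> k \<in> F i) else \<infinity>)"

definition VX :: "'p set \<Rightarrow> 'v set \<Rightarrow> ('v \<times> 'p set) set" where
  "VX Pi V = V \<times> Pow Pi"

definition VXi :: "'p set \<Rightarrow> 'v set \<Rightarrow> ('v \<Rightarrow> 'p) \<Rightarrow> 'p \<Rightarrow> ('v \<times> 'p set) set" where
  "VXi Pi V own i = {u \<in> VX Pi V. own (fst u) = i}"

definition EdgesX :: "'p set \<Rightarrow> 'v set \<Rightarrow> ('v \<times> 'v) set \<Rightarrow> ('p \<Rightarrow> 'v set)
    \<Rightarrow> (('v \<times> 'p set) \<times> ('v \<times> 'p set)) set" where
  "EdgesX Pi V E F = {((v, I), (v', I')). (v, I) \<in> VX Pi V \<and> (v, v') \<in> E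
                                 \<and> I' = I \<union> {i \<in> Pi. v' \<in> F i}}"

definition x0 :: "'p set \<Rightarrow> ('p \<Rightarrow> 'v set) \<Rightarrow> 'v \<Rightarrow> 'v \<times> 'p set" where
  "x0 Pi F v0 = (v0, {i \<in> Pi. v0 \<in> F i})"

(* target F^X_i = {(v,I). i \<in> I}; its reachability cost *)
definition costX :: "'p \<Rightarrow> (nat \<Rightarrow> 'v \<times> 'p set) \<Rightarrow> enat" where
  "costX i \<rho> = (if \<exists>k. i \<in> snd (\<rho> k) then enat (LEAST k. i \<in> snd (\<rho> k)) else \<infinity>)"

definition reachI :: "'p set \<Rightarrow> 'v set \<Rightarrow> ('v \<times> 'v) set \<Rightarrow> ('p \<Rightarrow> 'v set) \<Rightarrow> 'v \<Rightarrow> 'p set set" where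
  "reachI Pi V E F v0 = {I. \<exists>v. (x0 Pi F v0, (v, I)) \<in> (EdgesX Pi V E F)\<^sup>*}"

definition good_order :: "'p set \<Rightarrow> 'v set \<Rightarrow> ('v \<times> 'v) set \<Rightarrow> ('p \<Rightarrow> 'v set) \<Rightarrow> 'v
    \<Rightarrow> (nat \<Rightarrow> 'p set) \<Rightarrow> nat \<Rightarrow> bool" where
  "good_order Pi V E F v0 J N \<longleftrightarrow>
     N = card (reachI Pi V E F v0) \<and> bij_betw J {1..N} (reachI Pi V E F v0) \<and>
     (\<forall>m\<in>{1..N}. \<forall>n\<in>{1..N}.
        J m \<noteq> J n \<and> (\<exists>v v'. ((v, J m), (v', J n)) \<in> (EdgesX Pi V E F)\<^sup>*) \<longrightarrow> m < n)"

definition Vge :: "'v set \<Rightarrow> (nat \<Rightarrow> 'p set) \<Rightarrow> nat \<Rightarrow> nat \<Rightarrow> ('v \<times> 'p set) set" where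
  "Vge V J N n = {(v, J m) | v m. v \<in> V \<and> n \<le> m \<and> m \<le> N}"

definition playX :: "(('v \<times> 'p set) \<times> ('v \<times> 'p set)) set \<Rightarrow> 'v \<times> 'p set
    \<Rightarrow> (nat \<Rightarrow> 'v \<times> 'p set) \<Rightarrow> bool" where
  "playX Es u \<rho> \<longleftrightarrow> \<rho> 0 = u \<and> (\<forall>n. (\<rho> n, \<rho> (Suc n)) \<in> Es)"

definition consistent :: "'p set \<Rightarrow> 'v set \<Rightarrow> ('v \<Rightarrow> 'p) \<Rightarrow> ('v \<times> 'p set \<Rightarrow> enat)
    \<Rightarrow> (nat \<Rightarrow> 'v \<times> 'p set) \<Rightarrow> bool" where
  "consistent Pi V own lam \<rho> \<longleftrightarrow>
     (\<forall>n i. \<rho> n \<in> VXi Pi V own i \<longrightarrow> costX i (\<lambda>m. \<rho> (n + m)) \<le> lam (\<rho> n))"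

definition LambdaSet :: "'p set \<Rightarrow> 'v set \<Rightarrow> ('v \<Rightarrow> 'p) \<Rightarrow> ('v \<times> 'v) set \<Rightarrow> ('p \<Rightarrow> 'v set)
    \<Rightarrow> ('v \<times> 'p set \<Rightarrow> enat) \<Rightarrow> 'v \<times> 'p set \<Rightarrow> (nat \<Rightarrow> 'v \<times> 'p set) set" where
  "LambdaSet Pi V own E F lam u = {\<rho>. playX (EdgesX Pi V E F) u \<rho> \<and> consistent Pi V own lam \<rho>}"

definition lam0 :: "('v \<Rightarrow> 'p) \<Rightarrow> 'v \<times> 'p set \<Rightarrow> enat" where
  "lam0 own u = (if own (fst u) \<in> snd u then 0 else \<infinity>)"

definition update :: "'p set \<Rightarrow> 'v set \<Rightarrow> ('v \<Rightarrow> 'p) \<Rightarrow> ('v \<times> 'v) set \<Rightarrow> ('p \<Rightarrow> 'v set)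
    \<Rightarrow> ('v \<times> 'p set \<Rightarrow> enat) \<Rightarrow> ('v \<times> 'p set) set \<Rightarrow> 'v \<times> 'p set \<Rightarrow> enat" where
  "update Pi V own E F lam S u =
     (if u \<in> S then
        (if own (fst u) \<in> snd u then 0
         else 1 + (INF u' \<in> {u'. (u, u') \<in> EdgesX Pi V E F}.
                     SUP \<rho> \<in> LambdaSet Pi V own E F lam u'. costX (own (fst u)) \<rho>))
      else lam u)"

primrec lamseq :: "'p set \<Rightarrow> 'v set \<Rightarrow> ('v \<Rightarrow> 'p) \<Rightarrow> ('v \<times> 'v) set \<Rightarrow> ('p \<Rightarrow> 'v set)
    \<Rightarrow> (nat \<Rightarrow> 'p set) \<Rightarrow> nat \<Rightarrow> nat \<Rightarrow> ('v \<times> 'p set \<Rightarrow> enat) \<times> nat" where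
  "lamseq Pi V own E F J N 0 = (lam0 own, N)"
| "lamseq Pi V own E F J N (Suc k) =
     (let (lam, n) = lamseq Pi V own E F J N k;
          lam' = update Pi V own E F lam (Vge V J N n)
      in (lam', if lam' = lam \<and> n > 1 then n - 1 else n))"

definition lamk :: "'p set \<Rightarrow> 'v set \<Rightarrow> ('v \<Rightarrow> 'p) \<Rightarrow> ('v \<times> 'v) set \<Rightarrow> ('p \<Rightarrow> 'v set)
    \<Rightarrow> (nat \<Rightarrow> 'p set) \<Rightarrow> nat \<Rightarrow> nat \<Rightarrow> 'v \<times> 'p set \<Rightarrow> enat" where
  "lamk Pi V own E F J N k = fst (lamseq Pi V own E F J N k)"

end

theory Submission
  imports Defs
begin

text \<open>Both sequences decrease because the update is monotone in the labelling and bounded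
  by \<open>lam0\<close>, and because the labelling still equals \<open>lam0\<close> outside the current window
  \<open>Vge V J N n\<^sub>k\<close>. When the window grows, the labelling did not change in the step before, so
  on the newly covered vertices the new value is compared with \<open>lam0\<close>; on the others
  monotonicity of the update applies. Consistent plays then shrink with the labelling.\<close>

lemma LambdaSet_mono:
  assumes "\<And>u. l u \<le> l' u"
  shows "LambdaSet Pi V own E F l u \<subseteq> LambdaSet Pi V own E F l' u"
  unfolding LambdaSet_def consistent_def
  by (auto intro: order_trans[OF _ assms])

lemma update_mono:
  assumes "\<And>u. l u \<le> l' u" and "u \<in> S"
  shows "update Pi V own E F l S u \<le> update Pi V own E F l' S u"
proof -
  have "(INF u' \<in> {u'. (u, u') \<in> EdgesX Pi V E F}.
           SUP \<rho> \<in> LambdaSet Pi V own E F l u'. costX (own (fst u)) \<rho>)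
     \<le> (INF u' \<in> {u'. (u, u') \<in> EdgesX Pi V E F}.
           SUP \<rho> \<in> LambdaSet Pi V own E F l' u'. costX (own (fst u)) \<rho>)"
    by (intro INF_mono' SUP_subset_mono LambdaSet_mono assms(1) order_refl)
  then show ?thesis
    using assms(2) unfolding update_def by (simp add: add_left_mono)
qed

lemma update_le_lam0: "u \<in> S \<Longrightarrow> update Pi V own E F l S u \<le> lam0 own u"
  unfolding update_def lam0_def by auto

lemma update_outside: "u \<notin> S \<Longrightarrow> update Pi V own E F l S u = l u"
  unfolding update_def by simp

lemma update_inside_cong:
  "u \<in> S \<Longrightarrow> u \<in> S' \<Longrightarrow> update Pi V own E F l S u = update Pi V own E F l S' u"
  unfolding update_def by simp

lemma Vge_antimono: "n' \<le> n \<Longrightarrow> Vge V J N n \<subseteq> Vge V J N n'"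
  unfolding Vge_def by fastforce

context
  fixes Pi :: "'p set" and V :: "'v set" and own :: "'v \<Rightarrow> 'p"
    and E :: "('v \<times> 'v) set" and F :: "'p \<Rightarrow> 'v set"
    and J :: "nat \<Rightarrow> 'p set" and N :: nat
begin

abbreviation lam :: "nat \<Rightarrow> 'v \<times> 'p set \<Rightarrow> enat" where
  "lam \<equiv> lamk Pi V own E F J N"

abbreviation window :: "nat \<Rightarrow> nat" where
  "window k \<equiv> snd (lamseq Pi V own E F J N k)"

lemma lam_Suc: "lam (Suc k) = update Pi V own E F (lam k) (Vge V J N (window k))"
  unfolding lamk_def by (cases "lamseq Pi V own E F J N k") (simp add: Let_def)

lemma window_Suc:
  "window (Suc k) = (if lam (Suc k) = lam k \<and> window k > 1 then window k - 1 else window k)"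
  unfolding lamk_def by (cases "lamseq Pi V own E F J N k") (simp add: Let_def)

lemma window_Suc_le: "window (Suc k) \<le> window k"
  unfolding window_Suc by simp

lemma lam_Suc_eq_if_window_shrinks: "window (Suc k) \<noteq> window k \<Longrightarrow> lam (Suc k) = lam k"
  by (metis window_Suc)

lemma lam_0: "lam 0 = lam0 own"
  by (simp add: lamk_def)

lemma lam_eq_lam0_outside_window: "u \<notin> Vge V J N (window k) \<Longrightarrow> lam k u = lam0 own u"
proof (induction k)
  case 0
  then show ?case by (simp add: lam_0)
next
  case (Suc k)
  then have "u \<notin> Vge V J N (window k)"
    using Vge_antimono[OF window_Suc_le] by blast
  then show ?case
    using Suc.IH by (simp add: lam_Suc update_outside)
qed

lemma lam_Suc_le: "lam (Suc k) u \<le> lam k u"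
proof (induction k arbitrary: u)
  case 0
  show ?case
    unfolding lam_Suc lam_0
    by (cases "u \<in> Vge V J N (window 0)") (simp_all add: update_le_lam0 update_outside)
next
  case (Suc k)
  let ?W = "Vge V J N (window (Suc k))"
  show ?case
  proof (cases "u \<in> ?W")
    case False
    then show ?thesis by (simp add: lam_Suc[of "Suc k"] update_outside)
  next
    case in_new: True
    show ?thesis
    proof (cases "u \<in> Vge V J N (window k)")
      case True
      have "lam (Suc (Suc k)) u \<le> update Pi V own E F (lam k) ?W u"
        unfolding lam_Suc[of "Suc k"] using Suc.IH in_new by (rule update_mono)
      also have "\<dots> = lam (Suc k) u"
        unfolding lam_Suc[of k] using in_new True by (rule update_inside_cong)
      finally show ?thesis .
    next
      case False
      then have "window (Suc k) \<noteq> window k"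
        using in_new by auto
      then have unchanged: "lam (Suc k) = lam k"
        by (rule lam_Suc_eq_if_window_shrinks)
      have "lam (Suc (Suc k)) u \<le> lam0 own u"
        unfolding lam_Suc[of "Suc k"] using in_new by (rule update_le_lam0)
      also have "\<dots> = lam (Suc k) u"
        using lam_eq_lam0_outside_window[OF False] unchanged by simp
      finally show ?thesis .
    qed
  qed
qed

end

theorem lemma2p9:
  fixes Pi :: "'p set" and V :: "'v set" and own :: "'v \<Rightarrow> 'p"
    and E :: "('v \<times> 'v) set" and F :: "'p \<Rightarrow> 'v set" and v0 :: 'v
    and J :: "nat \<Rightarrow> 'p set" and N :: nat
  assumes "arena Pi V own E"
    and "\<forall>i\<in>Pi. F i \<subseteq> V"
    and "v0 \<in> V"
    and "good_order Pi V E F v0 J N"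
    and "v \<in> VX Pi V"
  shows "antimono (\<lambda>k. lamk Pi V own E F J N k v)
         \<and> antimono (\<lambda>k. LambdaSet Pi V own E F (lamk Pi V own E F J N k) v)"
  unfolding antimono_iff_le_Suc
  using lam_Suc_le LambdaSet_mono[where l = "lamk Pi V own E F J N (Suc k)"
      and l' = "lamk Pi V own E F J N k" for k, OF lam_Suc_le] by blast

end
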